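(* Let $G$ be a simple stochastic game and $\sigma$ a positional MAX strategy. There exists a positional best response $\tau$ to $\sigma$ such that for every positional MIN strategy $\tau'$ we have $Z(\sigma,\tau')\subseteq Z(\sigma,\tau)$.
   Context: A simple stochastic game (SSG) $G$ is a finite directed graph whose vertex set $V$ is partitioned into MAX vertices, MIN vertices, random vertices and a nonempty set $V_S$ of sinks; every non-sink vertex has at least one outgoing arc, every sink has exactly one outgoing arc, a self-loop; each random vertex $x$ carries a rational probability distribution $p_x$ on its out-neighbourhood, positive on every out-neighbour; each sink $s$ has rational value $\mathrm{Val}(s)\in[0,1]$. A positional MAX (resp. MIN) strategy assigns to each MAX (resp. MIN) vertex one of its out-neighbours. Under $\sigma,\tau$ from start $x_0$, the random play moves from MAX vertex $x$ to $\sigma(x)$, from MIN vertex $x$ to $\tau(x)$, from random vertex $x$ to an out-neighbour drawn by $p_x$ independently, and stays at a sink once reached; its value is $\mathrm{Val}(s)$ if it reaches sink $s$, else $0$, and $v_{\sigma,\tau}(x_0)$ is its expectation. A best response to $\sigma$ is a MIN strategy $\tau$ with $v_{\sigma,\tau}\le v_{\sigma,\tau'}$ pointwise for all MIN strategies $\tau'$. An absorbing set for $(\sigma,\tau)$ is a set $Z\subseteq V\setminus V_S$ such that, starting from any vertex of $Z$ and playing according to $(\sigma,\tau)$, the probability of ever reaching a vertex of $V\setminus Z$ is zero. $Z(\sigma,\tau)$ denotes the union of all absorbing sets for $(\sigma,\tau)$. *)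

theory Defs
  imports "HOL-Probability.Probability"
begin

record 'v ssg =
  verts   :: "'v set"
  maxv    :: "'v set"
  minv    :: "'v set"
  randv   :: "'v set"
  sinks   :: "'v set"
  arcs    :: "('v \<times> 'v) set"
  prob    :: "'v \<Rightarrow> 'v pmf"
  sval    :: "'v \<Rightarrow> real"

definition succs :: "'v ssg \<Rightarrow> 'v \<Rightarrow> 'v set" where
  "succs G x = {y. (x, y) \<in> arcs G}"

definition is_ssg :: "'v ssg \<Rightarrow> bool" where
  "is_ssg G \<longleftrightarrow>
     finite (verts G) \<and>
     maxv G \<union> minv G \<union> randv G \<union> sinks G = verts G \<and>
     maxv G \<inter> minv G = {} \<and> maxv G \<inter> randv G = {} \<and> maxv G \<inter> sinks G = {} \<and>
     minv G \<inter> randv G = {} \<and> minv G \<inter> sinks G = {} \<and> randv G \<inter> sinks G = {} \<and>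
     sinks G \<noteq> {} \<and>
     arcs G \<subseteq> verts G \<times> verts G \<and>
     (\<forall>x \<in> verts G - sinks G. succs G x \<noteq> {}) \<and>
     (\<forall>s \<in> sinks G. succs G s = {s}) \<and>
     (\<forall>x \<in> randv G. set_pmf (prob G x) = succs G x \<and>
                      (\<forall>y. pmf (prob G x) y \<in> \<rat>)) \<and>
     (\<forall>s \<in> sinks G. sval G s \<in> \<rat> \<and> 0 \<le> sval G s \<and> sval G s \<le> 1)"

definition max_strategy :: "'v ssg \<Rightarrow> ('v \<Rightarrow> 'v) \<Rightarrow> bool" where
  "max_strategy G \<sigma> \<longleftrightarrow> (\<forall>x \<in> maxv G. (x, \<sigma> x) \<in> arcs G)"

definition min_strategy :: "'v ssg \<Rightarrow> ('v \<Rightarrow> 'v) \<Rightarrow> bool" where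
  "min_strategy G \<tau> \<longleftrightarrow> (\<forall>x \<in> minv G. (x, \<tau> x) \<in> arcs G)"

definition step :: "'v ssg \<Rightarrow> ('v \<Rightarrow> 'v) \<Rightarrow> ('v \<Rightarrow> 'v) \<Rightarrow> 'v \<Rightarrow> 'v pmf" where
  "step G \<sigma> \<tau> x =
     (if x \<in> maxv G then return_pmf (\<sigma> x)
      else if x \<in> minv G then return_pmf (\<tau> x)
      else if x \<in> randv G then prob G x
      else return_pmf x)"

fun dist :: "'v ssg \<Rightarrow> ('v \<Rightarrow> 'v) \<Rightarrow> ('v \<Rightarrow> 'v) \<Rightarrow> nat \<Rightarrow> 'v \<Rightarrow> 'v pmf" where
  "dist G \<sigma> \<tau> 0 x = return_pmf x"
| "dist G \<sigma> \<tau> (Suc n) x = bind_pmf (dist G \<sigma> \<tau> n x) (step G \<sigma> \<tau>)"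

definition payoff :: "'v ssg \<Rightarrow> 'v \<Rightarrow> real" where
  "payoff G y = (if y \<in> sinks G then sval G y else 0)"

text \<open>Expected value of the play: since sinks are absorbing, the expected payoff
  at time n is nondecreasing in n and its supremum is the expectation of
  Val(s) on reaching sink s (0 if no sink is reached).\<close>
definition val :: "'v ssg \<Rightarrow> ('v \<Rightarrow> 'v) \<Rightarrow> ('v \<Rightarrow> 'v) \<Rightarrow> 'v \<Rightarrow> real" where
  "val G \<sigma> \<tau> x = (SUP n. measure_pmf.expectation (dist G \<sigma> \<tau> n x) (payoff G))"

definition best_response :: "'v ssg \<Rightarrow> ('v \<Rightarrow> 'v) \<Rightarrow> ('v \<Rightarrow> 'v) \<Rightarrow> bool" where
  "best_response G \<sigma> \<tau> \<longleftrightarrow> min_strategy G \<tau> \<and>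
     (\<forall>\<tau>'. min_strategy G \<tau>' \<longrightarrow> (\<forall>x \<in> verts G. val G \<sigma> \<tau> x \<le> val G \<sigma> \<tau>' x))"

text \<open>Z is absorbing: from any z in Z, the probability of ever being outside Z is 0,
  i.e. (countable union) the probability of being outside Z at each time n is 0.\<close>
definition absorbing :: "'v ssg \<Rightarrow> ('v \<Rightarrow> 'v) \<Rightarrow> ('v \<Rightarrow> 'v) \<Rightarrow> 'v set \<Rightarrow> bool" where
  "absorbing G \<sigma> \<tau> Z \<longleftrightarrow> Z \<subseteq> verts G - sinks G \<and>
     (\<forall>z \<in> Z. \<forall>n. measure_pmf.prob (dist G \<sigma> \<tau> n z) (verts G - Z) = 0)"

definition Zset :: "'v ssg \<Rightarrow> ('v \<Rightarrow> 'v) \<Rightarrow> ('v \<Rightarrow> 'v) \<Rightarrow> 'v set" where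
  "Zset G \<sigma> \<tau> = \<Union> {Z. absorbing G \<sigma> \<tau> Z}"

end

theory Submission
  imports Defs
begin

text \<open>
  Let \<open>v\<^sup>*\<close> (\<open>lower_val\<close>) be the lower value \<open>x \<mapsto> inf\<^sub>\<tau> val(\<sigma>,\<tau>)(x)\<close>. It dominates the
  payoff, it is superharmonic at every non-MIN vertex, and every MIN vertex has a successor
  where \<open>v\<^sup>*\<close> is not larger. Let \<open>W\<close> (\<open>Zset_any\<close>) be the union of all \<open>Z(\<sigma>,\<tau>')\<close>: \<open>v\<^sup>*\<close>
  vanishes on \<open>W\<close>, and from a MIN vertex \<open>x\<close> of \<open>W\<close> the move of a strategy \<open>\<tau>'\<close> with
  \<open>x \<in> Z(\<sigma>,\<tau>')\<close> stays in \<open>W\<close>. Let \<open>\<tau>\<close> move inside \<open>W\<close> on \<open>W\<close> and to a \<open>v\<^sup>*\<close>-minimal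
  successor elsewhere. Then \<open>v\<^sup>*\<close> is a superharmonic majorant of the payoff under \<open>(\<sigma>,\<tau>)\<close>,
  and the value is the least such function, so \<open>val(\<sigma>,\<tau>) \<le> v\<^sup>*\<close> and \<open>\<tau>\<close> is a best
  response. Moreover \<open>W\<close> contains no sink and is closed under \<open>(\<sigma>,\<tau>)\<close>, hence
  \<open>W \<subseteq> Z(\<sigma>,\<tau>)\<close>.
\<close>

lemma expectation_finite_pmf:
  "finite (set_pmf p) \<Longrightarrow>
     measure_pmf.expectation p (f :: _ \<Rightarrow> real) = (\<Sum>a\<in>set_pmf p. f a * pmf p a)"
  by (rule integral_measure_pmf_real) auto

lemma expectation_mono_finite_pmf:
  assumes "finite (set_pmf p)" and "\<And>a. a \<in> set_pmf p \<Longrightarrow> f a \<le> (g a :: real)"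
  shows "measure_pmf.expectation p f \<le> measure_pmf.expectation p g"
  using assms by (simp add: expectation_finite_pmf sum_mono mult_right_mono)

lemma expectation_bind_finite_pmf:
  assumes "finite (set_pmf p)" and "\<And>x. finite (set_pmf (q x))"
  shows "measure_pmf.expectation (bind_pmf p q) (h :: _ \<Rightarrow> real) =
           measure_pmf.expectation p (\<lambda>a. measure_pmf.expectation (q a) h)"
  using pmf_expectation_bind[of "set_pmf p" q p h] assms expectation_finite_pmf[of p]
  by (simp add: mult.commute)

locale ssg_with_max_strategy =
  fixes G :: "'v ssg" and \<sigma> :: "'v \<Rightarrow> 'v"
  assumes ssg: "is_ssg G" and max_strategy: "max_strategy G \<sigma>"
begin

lemma
  shows finite_verts: "finite (verts G)"
    and arcs_subset: "arcs G \<subseteq> verts G \<times> verts G"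
    and sinks_disjoint: "sinks G \<inter> (maxv G \<union> minv G \<union> randv G) = {}"
    and minv_disjoint_maxv: "minv G \<inter> maxv G = {}"
    and succs_minv_nonempty: "x \<in> minv G \<Longrightarrow> succs G x \<noteq> {}"
    and set_pmf_prob: "y \<in> randv G \<Longrightarrow> set_pmf (prob G y) = succs G y"
    and sval_bounds: "s \<in> sinks G \<Longrightarrow> 0 \<le> sval G s \<and> sval G s \<le> 1"
  using ssg unfolding is_ssg_def by auto

lemma succs_subset_verts: "succs G x \<subseteq> verts G"
  using arcs_subset unfolding succs_def by blast

lemma finite_succs: "finite (succs G x)"
  using finite_verts succs_subset_verts by (rule finite_subset[rotated])

lemma min_strategy_exists: "\<exists>\<tau>. min_strategy G \<tau>"
proof
  show "min_strategy G (\<lambda>x. SOME y. y \<in> succs G x)"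
    unfolding min_strategy_def
  proof
    fix x assume "x \<in> minv G"
    then have "(SOME y. y \<in> succs G x) \<in> succs G x"
      using succs_minv_nonempty by (simp add: some_in_eq)
    then show "(x, SOME y. y \<in> succs G x) \<in> arcs G" by (simp add: succs_def)
  qed
qed

lemma step_sink: "x \<in> sinks G \<Longrightarrow> step G \<sigma> \<tau> x = return_pmf x"
  using sinks_disjoint unfolding step_def by auto

lemma step_minv: "x \<in> minv G \<Longrightarrow> step G \<sigma> \<tau> x = return_pmf (\<tau> x)"
  using minv_disjoint_maxv unfolding step_def by auto

lemma step_not_minv: "x \<notin> minv G \<Longrightarrow> step G \<sigma> \<tau> x = step G \<sigma> \<tau>' x"
  unfolding step_def by simp

lemma finite_set_pmf_step: "finite (set_pmf (step G \<sigma> \<tau> x))"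
  unfolding step_def using set_pmf_prob finite_succs by auto

lemma set_pmf_step_subset_verts:
  assumes "min_strategy G \<tau>" and "x \<in> verts G"
  shows "set_pmf (step G \<sigma> \<tau> x) \<subseteq> verts G"
  using assms max_strategy succs_subset_verts set_pmf_prob
  unfolding step_def min_strategy_def max_strategy_def by (auto simp: succs_def)

lemma finite_set_pmf_dist: "finite (set_pmf (dist G \<sigma> \<tau> n x))"
  by (induction n) (auto simp: finite_set_pmf_step)

lemma dist_Suc_step: "dist G \<sigma> \<tau> (Suc n) x = bind_pmf (step G \<sigma> \<tau> x) (dist G \<sigma> \<tau> n)"
proof (induction n arbitrary: x)
  case 0
  then show ?case by (simp add: bind_return_pmf bind_return_pmf')
next
  case (Suc n)
  have "dist G \<sigma> \<tau> (Suc (Suc n)) x =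
          bind_pmf (bind_pmf (step G \<sigma> \<tau> x) (dist G \<sigma> \<tau> n)) (step G \<sigma> \<tau>)"
    by (simp only: dist.simps(2)[of _ _ _ "Suc n"] Suc)
  also have "\<dots> = bind_pmf (step G \<sigma> \<tau> x) (\<lambda>y. bind_pmf (dist G \<sigma> \<tau> n y) (step G \<sigma> \<tau>))"
    by (rule bind_assoc_pmf)
  also have "\<dots> = bind_pmf (step G \<sigma> \<tau> x) (dist G \<sigma> \<tau> (Suc n))"
    by (rule bind_pmf_cong) simp_all
  finally show ?case .
qed

lemma payoff_bounds: "0 \<le> payoff G y" "payoff G y \<le> 1"
  using sval_bounds unfolding payoff_def by auto

definition exp_payoff :: "('v \<Rightarrow> 'v) \<Rightarrow> nat \<Rightarrow> 'v \<Rightarrow> real" where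
  "exp_payoff \<tau> n x = measure_pmf.expectation (dist G \<sigma> \<tau> n x) (payoff G)"

lemma exp_payoff_0: "exp_payoff \<tau> 0 x = payoff G x"
  unfolding exp_payoff_def by simp

lemma exp_payoff_Suc:
  "exp_payoff \<tau> (Suc n) x = measure_pmf.expectation (step G \<sigma> \<tau> x) (exp_payoff \<tau> n)"
  unfolding exp_payoff_def dist_Suc_step
  by (rule expectation_bind_finite_pmf) (auto simp: finite_set_pmf_step finite_set_pmf_dist)

lemma exp_payoff_bounds: "0 \<le> exp_payoff \<tau> n x" "exp_payoff \<tau> n x \<le> 1"
  unfolding exp_payoff_def using payoff_bounds
  by (auto intro!: integral_nonneg_AE measure_pmf.integral_le_const
           simp: integrable_measure_pmf_finite finite_set_pmf_dist)

lemma exp_payoff_Suc_ge: "exp_payoff \<tau> n x \<le> exp_payoff \<tau> (Suc n) x"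
proof (induction n arbitrary: x)
  case 0
  show ?case
  proof (cases "x \<in> sinks G")
    case True
    then show ?thesis by (simp add: exp_payoff_Suc exp_payoff_0 step_sink)
  next
    case False
    then show ?thesis using exp_payoff_bounds(1)[of \<tau> 1 x] by (simp add: exp_payoff_0 payoff_def)
  qed
next
  case (Suc n)
  show ?case
    unfolding exp_payoff_Suc[of \<tau> "Suc n" x] exp_payoff_Suc[of \<tau> n x]
    by (rule expectation_mono_finite_pmf) (auto simp: finite_set_pmf_step Suc)
qed

lemma val_eq_SUP_exp_payoff: "val G \<sigma> \<tau> x = (SUP n. exp_payoff \<tau> n x)"
  unfolding val_def exp_payoff_def ..

lemma bdd_above_exp_payoff: "bdd_above (range (\<lambda>n. exp_payoff \<tau> n x))"
  using exp_payoff_bounds(2) by (intro bdd_aboveI2)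

lemma exp_payoff_le_val: "exp_payoff \<tau> n x \<le> val G \<sigma> \<tau> x"
  unfolding val_eq_SUP_exp_payoff by (rule cSUP_upper[OF _ bdd_above_exp_payoff]) simp

lemma val_nonneg: "0 \<le> val G \<sigma> \<tau> x"
  using exp_payoff_le_val[of \<tau> 0 x] exp_payoff_bounds(1)[of \<tau> 0 x] by linarith

lemma exp_payoff_LIMSEQ_val: "(\<lambda>n. exp_payoff \<tau> n x) \<longlonglongrightarrow> val G \<sigma> \<tau> x"
  unfolding val_eq_SUP_exp_payoff
  by (rule LIMSEQ_incseq_SUP[OF bdd_above_exp_payoff incseq_SucI]) (rule exp_payoff_Suc_ge)

lemma val_superharmonic:
  "measure_pmf.expectation (step G \<sigma> \<tau> x) (val G \<sigma> \<tau>) \<le> val G \<sigma> \<tau> x"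
proof -
  let ?p = "step G \<sigma> \<tau> x"
  have "(\<lambda>n. \<Sum>a\<in>set_pmf ?p. exp_payoff \<tau> n a * pmf ?p a)
          \<longlonglongrightarrow> (\<Sum>a\<in>set_pmf ?p. val G \<sigma> \<tau> a * pmf ?p a)"
    by (intro tendsto_intros exp_payoff_LIMSEQ_val)
  then have "(\<lambda>n. exp_payoff \<tau> (Suc n) x) \<longlonglongrightarrow> measure_pmf.expectation ?p (val G \<sigma> \<tau>)"
    by (simp add: exp_payoff_Suc expectation_finite_pmf finite_set_pmf_step)
  then show ?thesis
    by (rule LIMSEQ_le_const2) (auto intro: exp_payoff_le_val)
qed

lemma val_le_superharmonic_majorant:
  assumes "min_strategy G \<tau>"
    and "\<And>x. x \<in> verts G \<Longrightarrow> payoff G x \<le> v x"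
    and "\<And>x. x \<in> verts G \<Longrightarrow> measure_pmf.expectation (step G \<sigma> \<tau> x) v \<le> v x"
    and "x \<in> verts G"
  shows "val G \<sigma> \<tau> x \<le> v x"
proof -
  have "\<forall>x\<in>verts G. exp_payoff \<tau> n x \<le> v x" for n
  proof (induction n)
    case 0
    then show ?case using assms(2) by (simp add: exp_payoff_0)
  next
    case (Suc n)
    show ?case
    proof
      fix x assume x: "x \<in> verts G"
      have "exp_payoff \<tau> (Suc n) x \<le> measure_pmf.expectation (step G \<sigma> \<tau> x) v"
        unfolding exp_payoff_Suc
        by (rule expectation_mono_finite_pmf)
           (use Suc set_pmf_step_subset_verts[OF assms(1) x] in \<open>auto simp: finite_set_pmf_step\<close>)
      also have "\<dots> \<le> v x" using assms(3) x .
      finally show "exp_payoff \<tau> (Suc n) x \<le> v x" .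
    qed
  qed
  then show ?thesis unfolding val_eq_SUP_exp_payoff using assms(4) by (auto intro: cSUP_least)
qed

lemma set_pmf_dist_subset:
  assumes "\<And>z. z \<in> W \<Longrightarrow> set_pmf (step G \<sigma> \<tau> z) \<subseteq> W" and "z \<in> W"
  shows "set_pmf (dist G \<sigma> \<tau> n z) \<subseteq> W"
  using assms(2) by (induction n) (use assms(1) in auto)

lemma Zset_subset: "Zset G \<sigma> \<tau> \<subseteq> verts G - sinks G"
  unfolding Zset_def absorbing_def by blast

lemma set_pmf_step_Zset:
  assumes "min_strategy G \<tau>" and "z \<in> Zset G \<sigma> \<tau>"
  shows "set_pmf (step G \<sigma> \<tau> z) \<subseteq> Zset G \<sigma> \<tau>"
proof -
  obtain Z where Z: "absorbing G \<sigma> \<tau> Z" "z \<in> Z" using assms(2) unfolding Zset_def by auto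
  then have "measure_pmf.prob (dist G \<sigma> \<tau> 1 z) (verts G - Z) = 0"
    unfolding absorbing_def by blast
  then have "set_pmf (step G \<sigma> \<tau> z) \<inter> (verts G - Z) = {}"
    by (simp add: measure_pmf_zero_iff bind_return_pmf)
  moreover have "set_pmf (step G \<sigma> \<tau> z) \<subseteq> verts G"
    using set_pmf_step_subset_verts[OF assms(1)] Z unfolding absorbing_def by blast
  ultimately show ?thesis using Z unfolding Zset_def by blast
qed

lemma subset_ZsetI:
  assumes "W \<subseteq> verts G - sinks G" and "\<And>z. z \<in> W \<Longrightarrow> set_pmf (step G \<sigma> \<tau> z) \<subseteq> W"
  shows "W \<subseteq> Zset G \<sigma> \<tau>"
proof -
  have "set_pmf (dist G \<sigma> \<tau> n z) \<inter> (verts G - W) = {}" if "z \<in> W" for z n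
    using set_pmf_dist_subset[of W \<tau>, OF assms(2) that] by blast
  then have "absorbing G \<sigma> \<tau> W"
    unfolding absorbing_def using assms(1) by (simp add: measure_pmf_zero_iff)
  then show ?thesis unfolding Zset_def by blast
qed

lemma val_Zset:
  assumes "min_strategy G \<tau>" and "z \<in> Zset G \<sigma> \<tau>"
  shows "val G \<sigma> \<tau> z = 0"
proof -
  have "exp_payoff \<tau> n z = 0" for n
  proof -
    have "set_pmf (dist G \<sigma> \<tau> n z) \<inter> sinks G = {}"
      using set_pmf_dist_subset[OF set_pmf_step_Zset[OF assms(1)] assms(2)] Zset_subset by blast
    then show ?thesis
      unfolding exp_payoff_def payoff_def
      by (auto simp: expectation_finite_pmf finite_set_pmf_dist intro!: sum.neutral)
  qed
  then show ?thesis unfolding val_eq_SUP_exp_payoff by simp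
qed

definition lower_val :: "'v \<Rightarrow> real" where
  "lower_val x = (INF \<tau>\<in>{\<tau>. min_strategy G \<tau>}. val G \<sigma> \<tau> x)"

lemma lower_val_le_val: "min_strategy G \<tau> \<Longrightarrow> lower_val x \<le> val G \<sigma> \<tau> x"
  unfolding lower_val_def
  by (rule cINF_lower) (auto intro!: bdd_belowI[of _ 0] val_nonneg)

lemma lower_val_greatest: "(\<And>\<tau>. min_strategy G \<tau> \<Longrightarrow> c \<le> val G \<sigma> \<tau> x) \<Longrightarrow> c \<le> lower_val x"
  unfolding lower_val_def using min_strategy_exists by (auto intro: cINF_greatest)

lemma payoff_le_lower_val: "payoff G x \<le> lower_val x"
  using exp_payoff_le_val[of _ 0 x] by (auto intro: lower_val_greatest simp: exp_payoff_0)

lemma lower_val_nonneg: "0 \<le> lower_val x"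
  using val_nonneg by (blast intro: lower_val_greatest)

lemma lower_val_superharmonic_not_minv:
  assumes "x \<notin> minv G"
  shows "measure_pmf.expectation (step G \<sigma> \<tau> x) lower_val \<le> lower_val x"
proof (rule lower_val_greatest)
  fix \<tau>' assume \<tau>': "min_strategy G \<tau>'"
  have "measure_pmf.expectation (step G \<sigma> \<tau> x) lower_val =
          measure_pmf.expectation (step G \<sigma> \<tau>' x) lower_val"
    using step_not_minv[OF assms] by metis
  also have "\<dots> \<le> measure_pmf.expectation (step G \<sigma> \<tau>' x) (val G \<sigma> \<tau>')"
    by (rule expectation_mono_finite_pmf) (auto simp: finite_set_pmf_step intro: lower_val_le_val[OF \<tau>'])
  also have "\<dots> \<le> val G \<sigma> \<tau>' x" by (rule val_superharmonic)
  finally show "measure_pmf.expectation (step G \<sigma> \<tau> x) lower_val \<le> val G \<sigma> \<tau>' x" .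
qed

lemma lower_val_minv_successor:
  assumes "x \<in> minv G"
  obtains y where "(x, y) \<in> arcs G" and "lower_val y \<le> lower_val x"
proof -
  define y where "y = arg_min_on lower_val (succs G x)"
  have y: "y \<in> succs G x"
    unfolding y_def using finite_succs succs_minv_nonempty[OF assms] by (rule arg_min_if_finite)
  have y_min: "lower_val y \<le> lower_val z" if "z \<in> succs G x" for z
    unfolding y_def using finite_succs succs_minv_nonempty[OF assms] that by (rule arg_min_least)
  have "lower_val y \<le> lower_val x"
  proof (rule lower_val_greatest)
    fix \<tau>' assume \<tau>': "min_strategy G \<tau>'"
    have "\<tau>' x \<in> succs G x"
      using \<tau>' assms unfolding min_strategy_def succs_def by blast
    then have "lower_val y \<le> lower_val (\<tau>' x)" by (rule y_min)
    also have "\<dots> \<le> val G \<sigma> \<tau>' (\<tau>' x)" by (rule lower_val_le_val[OF \<tau>'])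
    also have "\<dots> \<le> val G \<sigma> \<tau>' x" using val_superharmonic[of \<tau>' x] by (simp add: step_minv[OF assms])
    finally show "lower_val y \<le> val G \<sigma> \<tau>' x" .
  qed
  then show thesis using that y unfolding succs_def by blast
qed

definition Zset_any :: "'v set" where
  "Zset_any = (\<Union>\<tau>\<in>{\<tau>. min_strategy G \<tau>}. Zset G \<sigma> \<tau>)"

lemma Zset_any_subset: "Zset_any \<subseteq> verts G - sinks G"
  unfolding Zset_any_def using Zset_subset by blast

lemma Zset_subset_Zset_any: "min_strategy G \<tau> \<Longrightarrow> Zset G \<sigma> \<tau> \<subseteq> Zset_any"
  unfolding Zset_any_def by blast

lemma Zset_anyE:
  assumes "z \<in> Zset_any"
  obtains \<tau> where "min_strategy G \<tau>" and "z \<in> Zset G \<sigma> \<tau>"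
  using assms unfolding Zset_any_def by blast

lemma lower_val_Zset_any:
  assumes "z \<in> Zset_any"
  shows "lower_val z = 0"
proof -
  obtain \<tau> where \<tau>: "min_strategy G \<tau>" and z: "z \<in> Zset G \<sigma> \<tau>"
    using assms by (rule Zset_anyE)
  have "lower_val z \<le> val G \<sigma> \<tau> z" using \<tau> by (rule lower_val_le_val)
  also have "\<dots> = 0" using \<tau> z by (rule val_Zset)
  finally show ?thesis using lower_val_nonneg[of z] by linarith
qed

lemma set_pmf_step_Zset_any:
  assumes "z \<in> Zset_any" and "z \<notin> minv G"
  shows "set_pmf (step G \<sigma> \<tau> z) \<subseteq> Zset_any"
proof -
  obtain \<tau>' where \<tau>': "min_strategy G \<tau>'" and z: "z \<in> Zset G \<sigma> \<tau>'"
    using assms(1) by (rule Zset_anyE)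
  have "set_pmf (step G \<sigma> \<tau> z) = set_pmf (step G \<sigma> \<tau>' z)"
    using step_not_minv[OF assms(2)] by metis
  also have "\<dots> \<subseteq> Zset G \<sigma> \<tau>'" using \<tau>' z by (rule set_pmf_step_Zset)
  also have "\<dots> \<subseteq> Zset_any" using \<tau>' by (rule Zset_subset_Zset_any)
  finally show ?thesis .
qed

lemma Zset_any_minv_successor:
  assumes "z \<in> Zset_any" and "z \<in> minv G"
  obtains y where "(z, y) \<in> arcs G" and "y \<in> Zset_any"
proof -
  obtain \<tau>' where \<tau>': "min_strategy G \<tau>'" and z: "z \<in> Zset G \<sigma> \<tau>'"
    using assms(1) by (rule Zset_anyE)
  have "(z, \<tau>' z) \<in> arcs G" using \<tau>' assms(2) unfolding min_strategy_def by blast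
  moreover have "\<tau>' z \<in> Zset G \<sigma> \<tau>'"
    using set_pmf_step_Zset[OF \<tau>' z] by (simp add: step_minv[OF assms(2)])
  ultimately show thesis using that Zset_subset_Zset_any[OF \<tau>'] by blast
qed

lemma minv_good_successor:
  assumes "x \<in> minv G"
  shows "\<exists>y. (x, y) \<in> arcs G \<and> lower_val y \<le> lower_val x \<and> (x \<in> Zset_any \<longrightarrow> y \<in> Zset_any)"
proof (cases "x \<in> Zset_any")
  case True
  then obtain y where "(x, y) \<in> arcs G" "y \<in> Zset_any"
    using assms by (rule Zset_any_minv_successor)
  then show ?thesis using lower_val_Zset_any lower_val_nonneg[of x] by auto
next
  case False
  obtain y where "(x, y) \<in> arcs G" "lower_val y \<le> lower_val x"
    using assms by (rule lower_val_minv_successor)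
  then show ?thesis using False by blast
qed

definition opt_response :: "'v \<Rightarrow> 'v" where
  "opt_response x =
     (SOME y. (x, y) \<in> arcs G \<and> lower_val y \<le> lower_val x \<and> (x \<in> Zset_any \<longrightarrow> y \<in> Zset_any))"

lemma opt_response:
  assumes "x \<in> minv G"
  shows "(x, opt_response x) \<in> arcs G" and "lower_val (opt_response x) \<le> lower_val x"
    and "x \<in> Zset_any \<Longrightarrow> opt_response x \<in> Zset_any"
  using someI_ex[OF minv_good_successor[OF assms]] unfolding opt_response_def by blast+

lemma min_strategy_opt_response: "min_strategy G opt_response"
  unfolding min_strategy_def using opt_response(1) by blast

lemma lower_val_superharmonic_opt_response:
  "measure_pmf.expectation (step G \<sigma> opt_response x) lower_val \<le> lower_val x"
proof (cases "x \<in> minv G")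
  case True
  then show ?thesis using opt_response(2) by (simp add: step_minv)
next
  case False
  then show ?thesis by (rule lower_val_superharmonic_not_minv)
qed

lemma best_response_opt_response: "best_response G \<sigma> opt_response"
  unfolding best_response_def
proof (intro conjI allI impI ballI min_strategy_opt_response)
  fix \<tau>' x assume "min_strategy G \<tau>'" and x: "x \<in> verts G"
  have "val G \<sigma> opt_response x \<le> lower_val x"
    using min_strategy_opt_response payoff_le_lower_val lower_val_superharmonic_opt_response x
    by (rule val_le_superharmonic_majorant)
  also have "\<dots> \<le> val G \<sigma> \<tau>' x" using \<open>min_strategy G \<tau>'\<close> by (rule lower_val_le_val)
  finally show "val G \<sigma> opt_response x \<le> val G \<sigma> \<tau>' x" .
qed

lemma Zset_any_subset_Zset_opt_response: "Zset_any \<subseteq> Zset G \<sigma> opt_response"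
proof (rule subset_ZsetI[OF Zset_any_subset])
  fix z assume z: "z \<in> Zset_any"
  show "set_pmf (step G \<sigma> opt_response z) \<subseteq> Zset_any"
  proof (cases "z \<in> minv G")
    case True
    then show ?thesis using opt_response(3)[OF True z] by (simp add: step_minv)
  next
    case False
    then show ?thesis using z set_pmf_step_Zset_any by blast
  qed
qed

end

theorem lemma20:
  assumes "is_ssg G" and "max_strategy G \<sigma>"
  shows "\<exists>\<tau>. best_response G \<sigma> \<tau> \<and>
           (\<forall>\<tau>'. min_strategy G \<tau>' \<longrightarrow> Zset G \<sigma> \<tau>' \<subseteq> Zset G \<sigma> \<tau>)"
proof -
  interpret ssg_with_max_strategy G \<sigma>
    using assms by unfold_locales
  have "Zset G \<sigma> \<tau>' \<subseteq> Zset G \<sigma> opt_response" if "min_strategy G \<tau>'" for \<tau>'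
    using Zset_subset_Zset_any[OF that] Zset_any_subset_Zset_opt_response by (rule order_trans)
  then show ?thesis using best_response_opt_response by blast
qed

end
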